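(* Let $H(s)$ be an SSS system of order $n$, and let $H_r(s)$ be a strictly proper ZIP system of order $r<n$ such that $H-H_r$ vanishes at $2r$ points $s_1,\dots,s_{2r}\in(0,\infty)$, counted with multiplicity (i.e. $H_r$ interpolates $H$ at these points, not necessarily distinct). Then all remaining zeros of the error system $H(s)-H_r(s)$ lie in $(-\infty,0)$.
   Context: A system $H(s)=\boldsymbol c^T(s\boldsymbol I-\boldsymbol A)^{-1}\boldsymbol b$ is state-space-symmetric (SSS) if $\boldsymbol A=\boldsymbol A^T$ and $\boldsymbol c=\boldsymbol b$; systems are assumed asymptotically stable. A system $H(s)=K\frac{\prod_{i=1}^{m-1}(s-z_i)}{\prod_{j=1}^m(s-\lambda_j)}$ is a strictly proper zero-interlacing-pole (ZIP) system if $0>\lambda_1>z_1>\lambda_2>z_2>\cdots>z_{m-1}>\lambda_m$; equivalently $H(s)=\sum_{i=1}^m\frac{b_i}{s-\lambda_i}$ with distinct $\lambda_i<0$ and all $b_i>0$. *)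

theory Defs
  imports "Jordan_Normal_Form.Determinant" "Jordan_Normal_Form.Char_Poly"
    "HOL-Computational_Algebra.Normalized_Fraction" "HOL-Computational_Algebra.Polynomial_Factorial" "HOL-Computational_Algebra.Field_as_Ring" "HOL-Library.Multiset"
begin

text \<open>Transfer function of the SSS system (A, b, c = b), as a rational function over the
complex numbers: c^T (sI - A)^{-1} b = c^T adj(sI - A) b / det(sI - A).
Here char_poly_matrix A is the polynomial matrix sI - A.\<close>
definition sss_tf :: "real mat \<Rightarrow> real vec \<Rightarrow> complex poly fract" where
  "sss_tf A b =
     (let M = char_poly_matrix (map_mat complex_of_real A);
          bp = map_vec (\<lambda>x. [:complex_of_real x:]) b
      in Fract (bp \<bullet> (adj_mat M *\<^sub>v bp)) (det M))"

definition pr_tf :: "nat \<Rightarrow> (nat \<Rightarrow> real) \<Rightarrow> (nat \<Rightarrow> real) \<Rightarrow> complex poly fract" where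
  "pr_tf r bi lam = (\<Sum>i<r. Fract [:complex_of_real (bi i):] [:- complex_of_real (lam i), 1:])"

definition zero_mult :: "complex poly fract \<Rightarrow> complex \<Rightarrow> nat" where
  "zero_mult F z = order z (fst (quot_of_fract F))"

text \<open>State-space-symmetric, asymptotically stable system of order n.\<close>
definition is_SSS :: "nat \<Rightarrow> real mat \<Rightarrow> real vec \<Rightarrow> bool" where
  "is_SSS n A b \<longleftrightarrow> A \<in> carrier_mat n n \<and> b \<in> carrier_vec n \<and> A = transpose_mat A \<and>
     (\<forall>k. eigenvalue (map_mat complex_of_real A) k \<longrightarrow> Re k < 0)"

definition is_ZIP :: "nat \<Rightarrow> (nat \<Rightarrow> real) \<Rightarrow> (nat \<Rightarrow> real) \<Rightarrow> bool" where
  "is_ZIP r bi lam \<longleftrightarrow> 0 < r \<and> inj_on lam {..<r} \<and> (\<forall>i<r. lam i < 0 \<and> bi i > 0)"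

end

theory Submission
  imports Defs "Jordan_Normal_Form.Schur_Decomposition"
begin

(* Write the error H - H_r as a single sum of simple fractions.  The SSS part contributes
   poles d_k < 0 with residues (u_k^T b)^2 >= 0, where u_k is an orthonormal eigenbasis of
   the symmetric matrix A (spectral theorem); the ZIP part contributes r negative poles.
   Grouping equal poles gives H - H_r = N/D over distinct poles P with nonzero residues W,
   deg N <= |P| - 1, and N has no root at the poles, so the zeros of H - H_r are those of N.
   At most r of the grouped residues are negative, and between two adjacent poles whose
   residues share a sign N changes sign; this yields at least |P| - 1 - 2r negative roots.
   Together with the 2r positive interpolation points this exhausts deg N, so every further
   zero is real and negative. *)

(* The group order from HOL-Algebra would otherwise shadow the root multiplicity order. *)
hide_const (open) Coset.order

text \<open>Numerator of the partial fraction sum \<open>\<Sum>\<^sub>p\<^sub>\<in>\<^sub>P w p / (x - p)\<close> over the common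
  denominator \<open>\<Prod>\<^sub>p\<^sub>\<in>\<^sub>P (x - p)\<close>, as a real function.\<close>
definition pf_num :: "real set \<Rightarrow> (real \<Rightarrow> real) \<Rightarrow> real \<Rightarrow> real" where
  "pf_num P w x = (\<Sum>p\<in>P. w p * (\<Prod>q\<in>P-{p}. (x - q)))"

text \<open>At a pole only the term of that pole survives.\<close>
lemma pf_num_at_pole:
  assumes "finite P" "p \<in> P"
  shows "pf_num P w p = w p * (\<Prod>q\<in>P-{p}. (p - q))"
proof -
  have "(\<Sum>p'\<in>P-{p}. w p' * (\<Prod>q\<in>P-{p'}. (p - q))) = 0"
  proof (rule sum.neutral, intro ballI)
    fix p' assume "p' \<in> P - {p}"
    then have "(\<Prod>q\<in>P-{p'}. (p - q)) = 0"
      using assms by (intro prod_zero) auto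
    then show "w p' * (\<Prod>q\<in>P-{p'}. (p - q)) = 0" by simp
  qed
  then show ?thesis
    unfolding pf_num_def using assms by (simp add: sum.remove)
qed

lemma pf_num_nonzero_at_pole:
  assumes "finite P" "p \<in> P" "w p \<noteq> 0"
  shows "pf_num P w p \<noteq> 0"
  using assms by (simp add: pf_num_at_pole)

text \<open>At two adjacent poles whose weights have the same sign the numerator takes values of
  opposite signs: the two products over the remaining poles have the same sign, while the
  factors \<open>p - p'\<close> and \<open>p' - p\<close> have opposite signs.\<close>
lemma pf_num_opposite_signs:
  assumes fin: "finite P" and p: "p \<in> P" and p': "p' \<in> P" and lt: "p < p'"
    and no_pole_between: "\<forall>q\<in>P. \<not> (p < q \<and> q < p')"
    and same_sign: "w p * w p' > 0"
  shows "pf_num P w p * pf_num P w p' < 0"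
proof -
  let ?Q = "P - {p, p'}"
  have fQ: "finite ?Q" using fin by auto
  have at_p: "pf_num P w p = w p * ((p - p') * (\<Prod>q\<in>?Q. (p - q)))"
  proof -
    have rest: "P - {p} = insert p' ?Q" using p' lt by auto
    have "(\<Prod>q\<in>P-{p}. (p - q)) = (p - p') * (\<Prod>q\<in>?Q. (p - q))"
      unfolding rest using fQ by (subst prod.insert) auto
    then show ?thesis by (simp add: pf_num_at_pole[OF fin p])
  qed
  have at_p': "pf_num P w p' = w p' * ((p' - p) * (\<Prod>q\<in>?Q. (p' - q)))"
  proof -
    have rest: "P - {p'} = insert p ?Q" using p lt by auto
    have "(\<Prod>q\<in>P-{p'}. (p' - q)) = (p' - p) * (\<Prod>q\<in>?Q. (p' - q))"
      unfolding rest using fQ by (subst prod.insert) auto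
    then show ?thesis by (simp add: pf_num_at_pole[OF fin p'])
  qed
  have outside: "(\<Prod>q\<in>?Q. (p - q)) * (\<Prod>q\<in>?Q. (p' - q)) > 0"
  proof -
    have "(\<Prod>q\<in>?Q. (p - q) * (p' - q)) > 0"
    proof (rule prod_pos)
      fix q assume "q \<in> ?Q"
      then have "q < p \<or> q > p'" using no_pole_between lt by force
      then show "(p - q) * (p' - q) > 0"
        using lt by (auto intro: mult_pos_pos mult_neg_neg)
    qed
    then show ?thesis by (simp add: prod.distrib)
  qed
  have "pf_num P w p * pf_num P w p' = (w p * w p') * ((p - p') * (p' - p)) *
      ((\<Prod>q\<in>?Q. (p - q)) * (\<Prod>q\<in>?Q. (p' - q)))"
    unfolding at_p at_p' by (simp add: algebra_simps)
  moreover have "(p - p') * (p' - p) < 0" using lt by (simp add: mult_neg_pos)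
  ultimately show ?thesis using same_sign outside by (simp add: mult_pos_neg mult_neg_pos)
qed

lemma pf_num_root_between_poles:
  assumes fin: "finite P" and p: "p \<in> P" and p': "p' \<in> P" and lt: "p < p'"
    and no_pole_between: "\<forall>q\<in>P. \<not> (p < q \<and> q < p')"
    and same_sign: "w p * w p' > 0"
  shows "\<exists>x. p < x \<and> x < p' \<and> pf_num P w x = 0"
proof -
  have opposite: "pf_num P w p * pf_num P w p' < 0"
    by (rule pf_num_opposite_signs[OF assms])
  have cont: "continuous_on {p..p'} (pf_num P w)"
    unfolding pf_num_def by (intro continuous_intros)
  have "\<exists>x\<ge>p. x \<le> p' \<and> pf_num P w x = 0"
  proof (cases "pf_num P w p < 0")
    case True
    then have "pf_num P w p' > 0" using opposite by (simp add: mult_less_0_iff)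
    then show ?thesis using IVT'[of "pf_num P w" p 0 p'] True cont lt by auto
  next
    case False
    then have "pf_num P w p > 0" "pf_num P w p' < 0" using opposite by (auto simp: mult_less_0_iff)
    then show ?thesis using IVT2'[of "pf_num P w" p' 0 p] cont lt by auto
  qed
  then obtain x where x: "p \<le> x" "x \<le> p'" "pf_num P w x = 0" by blast
  then have "x \<noteq> p" "x \<noteq> p'" using opposite by auto
  with x show ?thesis by (intro exI[of _ x]) auto
qed

text \<open>The poles of \<open>P\<close> other than the largest one each open a gap up to the next pole.\<close>
definition next_pole :: "real set \<Rightarrow> real \<Rightarrow> real" where
  "next_pole P p = Min {q\<in>P. p < q}"

lemma next_pole:
  assumes "finite P" "p \<in> P - {Max P}"
  shows "next_pole P p \<in> P" "p < next_pole P p"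
    and "\<forall>q\<in>P. \<not> (p < q \<and> q < next_pole P p)"
proof -
  have "p < Max P" using Max_ge[OF assms(1), of p] assms(2) by auto
  moreover have "Max P \<in> P" using assms by (intro Max_in) auto
  ultimately have ne: "{q\<in>P. p < q} \<noteq> {}" by blast
  have fin: "finite {q\<in>P. p < q}" using assms(1) by simp
  show "next_pole P p \<in> P" "p < next_pole P p"
    using Min_in[OF fin ne] unfolding next_pole_def by auto
  show "\<forall>q\<in>P. \<not> (p < q \<and> q < next_pole P p)"
    using Min_le[OF fin] unfolding next_pole_def by force
qed

lemma next_pole_le:
  assumes "finite P" "p' \<in> P" "p < p'"
  shows "next_pole P p \<le> p'"
  unfolding next_pole_def using assms by (intro Min_le) auto

lemma inj_on_next_pole:
  assumes "finite P"
  shows "inj_on (next_pole P) (P - {Max P})"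
proof -
  have mono: "next_pole P p < next_pole P p'"
    if "p \<in> P - {Max P}" "p' \<in> P - {Max P}" "p < p'" for p p'
    using next_pole_le[OF assms _ that(3)] next_pole(2)[OF assms that(2)] that by force
  show ?thesis
  proof (rule inj_onI, rule ccontr)
    fix p p' assume "p \<in> P - {Max P}" "p' \<in> P - {Max P}" "next_pole P p = next_pole P p'" "p \<noteq> p'"
    then show False using mono[of p p'] mono[of p' p] by (cases "p < p'") simp_all
  qed
qed

text \<open>A gap whose end poles carry weights of different signs needs a negative weight at one
  of its two ends; as \<open>next_pole\<close> is injective, there are at most \<open>2 * #negative\<close> such gaps.\<close>
lemma few_sign_changing_gaps:
  fixes w :: "real \<Rightarrow> real"
  assumes fin: "finite P" and nz: "\<forall>p\<in>P. w p \<noteq> 0"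
  shows "card {p\<in>P - {Max P}. \<not> w p * w (next_pole P p) > 0} \<le> 2 * card {p\<in>P. w p < 0}"
proof -
  define Neg where "Neg = {p\<in>P. w p < 0}"
  define gaps where "gaps = P - {Max P}"
  have fin': "finite gaps" "finite Neg" using fin unfolding gaps_def Neg_def by auto
  have "{p\<in>gaps. \<not> w p * w (next_pole P p) > 0} \<subseteq> Neg \<union> {p\<in>gaps. next_pole P p \<in> Neg}"
  proof
    fix p assume p: "p \<in> {p\<in>gaps. \<not> w p * w (next_pole P p) > 0}"
    then have "next_pole P p \<in> P" using next_pole(1)[OF fin] unfolding gaps_def by blast
    then have "w p \<noteq> 0" "w (next_pole P p) \<noteq> 0" using nz p unfolding gaps_def by auto
    then have "w p < 0 \<or> w (next_pole P p) < 0"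
      using p mult_pos_pos[of "w p" "w (next_pole P p)"] by (auto simp: linorder_neq_iff)
    then show "p \<in> Neg \<union> {p\<in>gaps. next_pole P p \<in> Neg}"
      using p \<open>next_pole P p \<in> P\<close> unfolding Neg_def gaps_def by auto
  qed
  then have "card {p\<in>gaps. \<not> w p * w (next_pole P p) > 0} \<le> card (Neg \<union> {p\<in>gaps. next_pole P p \<in> Neg})"
    by (rule card_mono[rotated]) (use fin' in simp)
  moreover have "card (Neg \<union> {p\<in>gaps. next_pole P p \<in> Neg}) \<le> card Neg + card {p\<in>gaps. next_pole P p \<in> Neg}"
    by (rule card_Un_le)
  moreover have "card {p\<in>gaps. next_pole P p \<in> Neg} \<le> card Neg"
    using inj_on_next_pole[OF fin] unfolding gaps_def[symmetric]
    by (intro card_inj_on_le[OF inj_on_subset]) (use fin' in auto)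
  ultimately show ?thesis unfolding Neg_def gaps_def by linarith
qed

lemma pf_num_roots_in_gaps:
  fixes w :: "real \<Rightarrow> real"
  assumes fin: "finite P" and neg: "\<forall>p\<in>P. p < 0"
  defines "good \<equiv> {p\<in>P - {Max P}. w p * w (next_pole P p) > 0}"
  shows "\<exists>R. finite R \<and> card R = card good \<and> (\<forall>x\<in>R. x < 0 \<and> pf_num P w x = 0)"
proof -
  have roots_exist: "\<forall>p\<in>good. \<exists>x. p < x \<and> x < next_pole P p \<and> pf_num P w x = 0"
  proof
    fix p assume "p \<in> good"
    then have p: "p \<in> P - {Max P}" "w p * w (next_pole P p) > 0" unfolding good_def by auto
    show "\<exists>x. p < x \<and> x < next_pole P p \<and> pf_num P w x = 0"
      using pf_num_root_between_poles[OF fin _ next_pole[OF fin p(1)] p(2)] p(1) by blast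
  qed
  obtain root where root: "\<forall>p\<in>good. p < root p \<and> root p < next_pole P p \<and> pf_num P w (root p) = 0"
    using bchoice[OF roots_exist] by blast
  have root_mono: "root p < root p'" if "p \<in> good" "p' \<in> good" "p < p'" for p p'
  proof -
    have "root p < next_pole P p" using root that(1) by blast
    also have "next_pole P p \<le> p'"
      using next_pole_le[OF fin _ that(3)] that unfolding good_def by blast
    also have "p' < root p'" using root that(2) by blast
    finally show ?thesis .
  qed
  have "inj_on root good"
  proof (rule inj_onI, rule ccontr)
    fix p p' assume "p \<in> good" "p' \<in> good" "root p = root p'" "p \<noteq> p'"
    then show False using root_mono[of p p'] root_mono[of p' p] by (cases "p < p'") simp_all
  qed
  then have "card (root ` good) = card good" by (rule card_image)
  moreover have "\<forall>x\<in>root ` good. x < 0 \<and> pf_num P w x = 0"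
  proof
    fix x assume "x \<in> root ` good"
    then obtain p where p: "p \<in> good" "x = root p" by blast
    then have "next_pole P p < 0" using next_pole(1)[OF fin] neg unfolding good_def by blast
    moreover have "x < next_pole P p" "pf_num P w x = 0" using root p by auto
    ultimately show "x < 0 \<and> pf_num P w x = 0" by simp
  qed
  moreover have "finite good" using fin unfolding good_def by simp
  ultimately show ?thesis by (intro exI[of _ "root ` good"]) simp
qed

lemma pf_num_negative_roots:
  assumes fin: "finite P" and nz: "\<forall>p\<in>P. w p \<noteq> 0" and neg: "\<forall>p\<in>P. p < 0"
  shows "\<exists>R. finite R \<and> card P - 1 \<le> card R + 2 * card {p\<in>P. w p < 0}
            \<and> (\<forall>x\<in>R. x < 0 \<and> pf_num P w x = 0)"
proof -
  define gaps where "gaps = P - {Max P}"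
  define good where "good = {p\<in>gaps. w p * w (next_pole P p) > 0}"
  have "card gaps = card P - 1"
    unfolding gaps_def using fin by (cases "P = {}") (auto simp: card_Diff_singleton)
  moreover have "card gaps = card good + card (gaps - good)"
    using card_Diff_subset[of good gaps] card_mono[of gaps good] fin
    unfolding good_def gaps_def by fastforce
  moreover have "card (gaps - good) \<le> 2 * card {p\<in>P. w p < 0}"
  proof -
    have "gaps - good = {p\<in>P - {Max P}. \<not> w p * w (next_pole P p) > 0}"
      unfolding good_def gaps_def by auto
    then show ?thesis using few_sign_changing_gaps[OF fin nz] by simp
  qed
  ultimately have "card P - 1 \<le> card good + 2 * card {p\<in>P. w p < 0}" by linarith
  then show ?thesis
    using pf_num_roots_in_gaps[OF fin neg, of w] unfolding good_def gaps_def by fastforce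
qed

definition pf_num_poly :: "real set \<Rightarrow> (real \<Rightarrow> real) \<Rightarrow> complex poly" where
  "pf_num_poly P w = (\<Sum>p\<in>P. [:complex_of_real (w p):] * (\<Prod>q\<in>P-{p}. [:- complex_of_real q, 1:]))"

definition pf_den_poly :: "real set \<Rightarrow> complex poly" where
  "pf_den_poly P = (\<Prod>p\<in>P. [:- complex_of_real p, 1:])"

lemma poly_pf_num_poly: "poly (pf_num_poly P w) (complex_of_real x) = complex_of_real (pf_num P w x)"
  unfolding pf_num_poly_def pf_num_def by (simp add: poly_sum poly_prod)

text \<open>Each summand omits one linear factor, so the degree is at most \<open>card P - 1\<close>.\<close>
lemma degree_pf_num_poly:
  assumes "finite P"
  shows "degree (pf_num_poly P w) \<le> card P - 1"
  unfolding pf_num_poly_def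
proof (rule degree_sum_le[OF assms])
  fix p assume p: "p \<in> P"
  have "degree (\<Prod>q\<in>P-{p}. [:- complex_of_real q, 1:]) = card (P - {p})"
    by (subst degree_prod_sum_eq) auto
  also have "\<dots> = card P - 1" using p assms by simp
  finally show "degree ([:complex_of_real (w p):] * (\<Prod>q\<in>P-{p}. [:- complex_of_real q, 1:])) \<le> card P - 1"
    by (metis degree_mult_le degree_pCons_0 add_0)
qed

lemma size_le_degree_if_count_le_order:
  fixes p :: "'a::idom poly"
  assumes "p \<noteq> 0" and "\<forall>x. count M x \<le> order x p"
  shows "size M \<le> degree p"
proof -
  have roots: "set_mset M \<subseteq> {x. poly p x = 0}"
  proof
    fix x assume "x \<in># M"
    then have "0 < order x p" using assms(2) by (metis count_greater_zero_iff less_le_trans)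
    then show "x \<in> {x. poly p x = 0}" by (simp add: order_root)
  qed
  have "size M = (\<Sum>x\<in>set_mset M. count M x)" by (rule size_multiset_overloaded_eq)
  also have "\<dots> \<le> (\<Sum>x\<in>set_mset M. order x p)" using assms(2) by (intro sum_mono) auto
  also have "\<dots> \<le> (\<Sum>x | poly p x = 0. order x p)"
    by (rule sum_mono2[OF poly_roots_finite[OF assms(1)] roots]) auto
  also have "\<dots> \<le> degree p" by (rule sum_order_le_degree[OF assms(1)])
  finally show ?thesis .
qed

lemma count_image_of_real: "count (image_mset complex_of_real S) (complex_of_real x) = count S x"
proof -
  have "complex_of_real -` {complex_of_real x} \<inter> set_mset S = (if x \<in># S then {x} else {})"
    by auto
  then show ?thesis by (simp add: count_image_mset not_in_iff)
qed

lemma count_image_of_real_le: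
  assumes "\<forall>x. count S x \<le> f (complex_of_real x)"
  shows "count (image_mset complex_of_real S) z \<le> f z"
proof (cases "z \<in> range complex_of_real")
  case True
  then obtain x where "z = complex_of_real x" by blast
  then show ?thesis using assms by (simp add: count_image_of_real)
next
  case False
  then have "z \<notin># image_mset complex_of_real S" by auto
  then have "count (image_mset complex_of_real S) z = 0" by (simp only: not_in_iff)
  then show ?thesis by simp
qed

text \<open>The numerator has degree at most \<open>card P - 1\<close>; it already has
  \<open>2r\<close> positive roots from \<open>S\<close> and at least \<open>card P - 1 - 2r\<close> negative roots between the poles.
  Hence it has no further root: any root beyond \<open>S\<close> is one of the real negative ones.\<close>
lemma pf_num_poly_other_roots_negative:
  fixes P :: "real set" and w :: "real \<Rightarrow> real" and S :: "real multiset"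
  defines "N \<equiv> pf_num_poly P w"
  assumes fin: "finite P" and nz: "\<forall>p\<in>P. w p \<noteq> 0" and neg: "\<forall>p\<in>P. p < 0"
    and few_negative: "card {p\<in>P. w p < 0} \<le> r"
    and N0: "N \<noteq> 0"
    and size_S: "size S = 2 * r" and pos: "\<forall>x\<in>#S. x > 0"
    and S_roots: "\<forall>x. count S x \<le> order (complex_of_real x) N"
  shows "\<forall>z. count (image_mset complex_of_real S) z < order z N \<longrightarrow> z \<in> \<real> \<and> Re z < 0"
proof (intro allI impI, rule ccontr)
  fix z assume extra: "count (image_mset complex_of_real S) z < order z N"
    and not_neg: "\<not> (z \<in> \<real> \<and> Re z < 0)"
  obtain R where R: "finite R" "card P - 1 \<le> card R + 2 * card {p\<in>P. w p < 0}"
      and R_roots: "\<forall>x\<in>R. x < 0 \<and> pf_num P w x = 0"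
    using pf_num_negative_roots[OF fin nz neg] by blast
  define S' where "S' = image_mset complex_of_real S"
  define M where "M = S' + add_mset z (mset_set (complex_of_real ` R))"
  text \<open>The multiset \<open>M\<close> collects the interpolation points, the extra zero \<open>z\<close>
    and the negative roots found between the poles; all are zeros of \<open>N\<close>.\<close>
  have "count M x \<le> order x N" for x
  proof (cases "x \<in> complex_of_real ` R")
    case True
    then obtain y where y: "y \<in> R" "x = complex_of_real y" by blast
    then have "poly N x = 0" using R_roots unfolding N_def by (simp add: poly_pf_num_poly)
    then have "order x N \<ge> 1" using N0 by (simp add: order_root Suc_le_eq)
    moreover have "count S' x = 0"
      using y R_roots pos count_image_of_real[of S y] unfolding S'_def
      by (metis count_eq_zero_iff less_asym)
    moreover have "x \<noteq> z" using not_neg y R_roots by auto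
    ultimately show ?thesis using True R(1) unfolding M_def by simp
  next
    case False
    have "count S' x \<le> order x N"
      unfolding S'_def by (rule count_image_of_real_le[OF S_roots])
    then show ?thesis using False extra R(1) unfolding M_def S'_def by auto
  qed
  then have "size M \<le> degree N" by (intro size_le_degree_if_count_le_order[OF N0]) auto
  also have "\<dots> \<le> card P - 1" unfolding N_def by (rule degree_pf_num_poly[OF fin])
  finally have "size M \<le> card P - 1" .
  moreover have "size M = 2 * r + 1 + card R"
    using size_S R(1) unfolding M_def S'_def by (simp add: card_image inj_on_def)
  ultimately show False using R(2) few_negative by linarith
qed

abbreviation const_fract :: "real \<Rightarrow> complex poly fract" where
  "const_fract c \<equiv> to_fract [:complex_of_real c:]"

abbreviation pole_fract :: "real \<Rightarrow> complex poly fract" where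
  "pole_fract x \<equiv> to_fract [:- complex_of_real x, 1:]"

lemma to_fract_prod: "to_fract (prod f A) = (\<Prod>x\<in>A. to_fract (f x))"
  by (induction A rule: infinite_finite_induct) auto

lemma const_fract_sum: "(\<Sum>k\<in>K. const_fract (c k)) = const_fract (\<Sum>k\<in>K. c k)"
  by (induction K rule: infinite_finite_induct) (simp_all flip: to_fract_add)

lemma sum_over_common_denominator:
  fixes L c :: "'k \<Rightarrow> 'a :: field"
  assumes fin: "finite K" and nz: "\<forall>k\<in>K. L k \<noteq> 0"
  shows "(\<Sum>k\<in>K. c k / L k) = (\<Sum>k\<in>K. c k * (\<Prod>j\<in>K-{k}. L j)) / (\<Prod>j\<in>K. L j)"
proof -
  have "c k * (\<Prod>j\<in>K-{k}. L j) / (\<Prod>j\<in>K. L j) = c k / L k" if k: "k \<in> K" for k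
  proof -
    have "(\<Prod>j\<in>K-{k}. L j) \<noteq> 0" using nz fin by auto
    moreover have "(\<Prod>j\<in>K. L j) = L k * (\<Prod>j\<in>K-{k}. L j)" using fin k by (rule prod.remove)
    ultimately show ?thesis using nz k by (simp add: field_simps)
  qed
  then show ?thesis by (simp add: sum_divide_distrib)
qed

lemma pf_sum_grouped:
  fixes c p :: "'k \<Rightarrow> real"
  assumes fin: "finite K"
  defines "W \<equiv> (\<lambda>x. \<Sum>k\<in>{k\<in>K. p k = x}. c k)"
  defines "P \<equiv> {x\<in>p ` K. W x \<noteq> 0}"
  shows "(\<Sum>k\<in>K. const_fract (c k) / pole_fract (p k))
           = to_fract (pf_num_poly P W) / to_fract (pf_den_poly P)"
proof -
  have "(\<Sum>k\<in>K. const_fract (c k) / pole_fract (p k))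
        = (\<Sum>x\<in>p ` K. \<Sum>k\<in>{k\<in>K. p k = x}. const_fract (c k) / pole_fract (p k))"
    by (rule sum.image_gen[OF fin])
  also have "\<dots> = (\<Sum>x\<in>p ` K. const_fract (W x) / pole_fract x)"
  proof (rule sum.cong[OF refl])
    fix x
    have "(\<Sum>k\<in>{k\<in>K. p k = x}. const_fract (c k) / pole_fract (p k))
          = (\<Sum>k\<in>{k\<in>K. p k = x}. const_fract (c k)) / pole_fract x"
      by (simp add: sum_divide_distrib)
    then show "(\<Sum>k\<in>{k\<in>K. p k = x}. const_fract (c k) / pole_fract (p k))
               = const_fract (W x) / pole_fract x"
      unfolding W_def const_fract_sum .
  qed
  also have "\<dots> = (\<Sum>x\<in>P. const_fract (W x) / pole_fract x)"
    unfolding P_def by (rule sum.mono_neutral_right) (use fin in auto)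
  also have "\<dots> = (\<Sum>x\<in>P. const_fract (W x) * (\<Prod>j\<in>P-{x}. pole_fract j)) / (\<Prod>j\<in>P. pole_fract j)"
    by (rule sum_over_common_denominator) (use fin in \<open>auto simp: P_def\<close>)
  also have "\<dots> = to_fract (pf_num_poly P W) / to_fract (pf_den_poly P)"
    by (simp only: pf_num_poly_def pf_den_poly_def to_fract_sum to_fract_mult to_fract_prod)
  finally show ?thesis .
qed

lemma zero_mult_no_common_root:
  fixes N D :: "complex poly"
  assumes N0: "N \<noteq> 0" and D0: "D \<noteq> 0"
    and no_common: "\<And>x. poly D x = 0 \<Longrightarrow> poly N x \<noteq> 0"
  shows "zero_mult (to_fract N / to_fract D) z = order z N"
proof -
  have "to_fract N / to_fract D = quot_to_fract (N, D)"
    by (simp add: quot_to_fract_def Fract_conv_to_fract)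
  then have "quot_of_fract (to_fract N / to_fract D) = normalize_quot (N, D)"
    by (simp add: quot_of_fract_quot_to_fract)
  moreover obtain d where d: "N = fst (normalize_quot (N, D)) * d"
      "D = snd (normalize_quot (N, D)) * d" "d \<noteq> 0"
    using normalize_quotE[OF D0, of N] by metis
  moreover have "order z d = 0"
  proof (cases "poly d z = 0")
    case True
    then have "poly N z = 0" "poly D z = 0" using d(1,2) by (metis mult_zero_right poly_mult)+
    then show ?thesis using no_common by blast
  qed (rule order_0I)
  ultimately show ?thesis
    unfolding zero_mult_def using N0 by (metis order_mult add_0_right)
qed

lemma zero_mult_pf_quotient:
  assumes fin: "finite P" and nz: "\<forall>p\<in>P. w p \<noteq> 0" and N0: "pf_num_poly P w \<noteq> 0"
  shows "zero_mult (to_fract (pf_num_poly P w) / to_fract (pf_den_poly P)) z = order z (pf_num_poly P w)"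
proof (rule zero_mult_no_common_root[OF N0])
  show "pf_den_poly P \<noteq> 0" unfolding pf_den_poly_def using fin by auto
  fix x assume "poly (pf_den_poly P) x = 0"
  then obtain p where "p \<in> P" "x = complex_of_real p"
    unfolding pf_den_poly_def poly_prod using fin by auto
  then show "poly (pf_num_poly P w) x \<noteq> 0"
    using pf_num_nonzero_at_pole[OF fin] nz by (simp add: poly_pf_num_poly)
qed

text \<open>If a real symmetric matrix acts on the pair \<open>(x, y)\<close> (the real and imaginary parts of a
  complex eigenvector for \<open>a + i\<beta>\<close>) as a rotation-dilation, then \<open>\<beta> = 0\<close> unless \<open>x = y = 0\<close>.\<close>
lemma symmetric_rotation_pair:
  fixes A :: "real mat"
  assumes A: "A \<in> carrier_mat n n" and sym: "transpose_mat A = A"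
    and x: "x \<in> carrier_vec n" and y: "y \<in> carrier_vec n"
    and Ax: "A *\<^sub>v x = a \<cdot>\<^sub>v x - \<beta> \<cdot>\<^sub>v y" and Ay: "A *\<^sub>v y = \<beta> \<cdot>\<^sub>v x + a \<cdot>\<^sub>v y"
    and nonzero: "x \<noteq> 0\<^sub>v n \<or> y \<noteq> 0\<^sub>v n"
  shows "\<beta> = 0"
proof -
  have "(transpose_mat A *\<^sub>v y) \<bullet> x = y \<bullet> (A *\<^sub>v x)"
    by (rule transpose_vec_mult_scalar[OF A x y])
  then have "\<beta> * (x \<bullet> x) + a * (y \<bullet> x) = a * (y \<bullet> x) - \<beta> * (y \<bullet> y)"
    unfolding sym Ax Ay using x y by (simp add: add_scalar_prod_distrib[of _ n] 
        scalar_prod_minus_distrib[of _ n] comm_scalar_prod[of y n x])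
  then have "\<beta> * (x \<bullet> x + y \<bullet> y) = 0" by (simp add: algebra_simps)
  moreover have "x \<bullet> x + y \<bullet> y > 0"
    using nonzero conjugate_square_greater_0_vec[OF x] conjugate_square_greater_0_vec[OF y]
      conjugate_square_ge_0_vec[of x] conjugate_square_ge_0_vec[of y] by auto
  ultimately show ?thesis by simp
qed

lemma real_imag_parts_of_eigenvector:
  fixes A :: "real mat" and v :: "complex vec"
  assumes A: "A \<in> carrier_mat n n" and v: "v \<in> carrier_vec n"
    and Av: "map_mat complex_of_real A *\<^sub>v v = z \<cdot>\<^sub>v v"
  defines "x \<equiv> vec n (\<lambda>i. Re (v $ i))" and "y \<equiv> vec n (\<lambda>i. Im (v $ i))"
  shows "A *\<^sub>v x = Re z \<cdot>\<^sub>v x - Im z \<cdot>\<^sub>v y" and "A *\<^sub>v y = Im z \<cdot>\<^sub>v x + Re z \<cdot>\<^sub>v y"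
    and "v \<noteq> 0\<^sub>v n \<Longrightarrow> x \<noteq> 0\<^sub>v n \<or> y \<noteq> 0\<^sub>v n"
proof -
  have x: "x \<in> carrier_vec n" and y: "y \<in> carrier_vec n" unfolding x_def y_def by auto
  have row: "(\<Sum>j\<in>{0..<n}. complex_of_real (A $$ (i,j)) * v $ j) = z * v $ i" if i: "i < n" for i
  proof -
    have "(map_mat complex_of_real A *\<^sub>v v) $ i = (z \<cdot>\<^sub>v v) $ i" using Av by simp
    then show ?thesis using i A v by (simp add: scalar_prod_def)
  qed
  show "A *\<^sub>v x = Re z \<cdot>\<^sub>v x - Im z \<cdot>\<^sub>v y"
  proof (rule eq_vecI)
    fix i assume "i < dim_vec (Re z \<cdot>\<^sub>v x - Im z \<cdot>\<^sub>v y)"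
    then have i: "i < n" using x y by simp
    have "Re (\<Sum>j\<in>{0..<n}. complex_of_real (A $$ (i,j)) * v $ j) = Re (z * v $ i)"
      using row[OF i] by simp
    then show "(A *\<^sub>v x) $ i = (Re z \<cdot>\<^sub>v x - Im z \<cdot>\<^sub>v y) $ i"
      using i A unfolding x_def y_def by (simp add: scalar_prod_def)
  qed (use A x y in simp)
  show "A *\<^sub>v y = Im z \<cdot>\<^sub>v x + Re z \<cdot>\<^sub>v y"
  proof (rule eq_vecI)
    fix i assume "i < dim_vec (Im z \<cdot>\<^sub>v x + Re z \<cdot>\<^sub>v y)"
    then have i: "i < n" using x y by simp
    have "Im (\<Sum>j\<in>{0..<n}. complex_of_real (A $$ (i,j)) * v $ j) = Im (z * v $ i)"
      using row[OF i] by simp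
    then show "(A *\<^sub>v y) $ i = (Im z \<cdot>\<^sub>v x + Re z \<cdot>\<^sub>v y) $ i"
      using i A unfolding x_def y_def by (simp add: scalar_prod_def algebra_simps)
  qed (use A x y in simp)
  show "x \<noteq> 0\<^sub>v n \<or> y \<noteq> 0\<^sub>v n" if v0: "v \<noteq> 0\<^sub>v n"
  proof (rule ccontr)
    assume "\<not> ?thesis"
    then have "x $ i = 0" "y $ i = 0" if "i < n" for i
      using that by auto
    then have "v $ i = 0" if "i < n" for i
      using that unfolding x_def y_def by (simp add: complex_eq_iff)
    then have "v = 0\<^sub>v n" using v by (intro eq_vecI) auto
    then show False using v0 by simp
  qed
qed

text \<open>A real symmetric matrix has a real eigenvector: the real or the imaginary part of a complex
  one (which exists by the fundamental theorem of algebra).\<close>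
lemma real_symmetric_eigenvector:
  fixes A :: "real mat"
  assumes A: "A \<in> carrier_mat n n" and sym: "transpose_mat A = A" and n: "n > 0"
  shows "\<exists>e v. v \<in> carrier_vec n \<and> v \<noteq> 0\<^sub>v n \<and> A *\<^sub>v v = e \<cdot>\<^sub>v v"
proof -
  define Ac where "Ac = map_mat complex_of_real A"
  have Ac: "Ac \<in> carrier_mat n n" unfolding Ac_def using A by simp
  have "degree (char_poly Ac) = n" using degree_monic_char_poly[OF Ac] by simp
  then have "\<not> constant (poly (char_poly Ac))" using n by (simp add: constant_degree)
  then obtain z where "poly (char_poly Ac) z = 0" using fundamental_theorem_of_algebra by blast
  then obtain v where "eigenvector Ac v z"
    using eigenvalue_root_char_poly[OF Ac] unfolding eigenvalue_def by blast
  then have v: "v \<in> carrier_vec n" and v0: "v \<noteq> 0\<^sub>v n" and Av: "Ac *\<^sub>v v = z \<cdot>\<^sub>v v"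
    unfolding eigenvector_def using Ac by auto
  define x where "x = vec n (\<lambda>i. Re (v $ i))"
  define y where "y = vec n (\<lambda>i. Im (v $ i))"
  have x: "x \<in> carrier_vec n" and y: "y \<in> carrier_vec n" unfolding x_def y_def by auto
  note parts = real_imag_parts_of_eigenvector[OF A v Av[unfolded Ac_def], folded x_def y_def]
  have nonzero: "x \<noteq> 0\<^sub>v n \<or> y \<noteq> 0\<^sub>v n" by (rule parts(3)[OF v0])
  have "Im z = 0" by (rule symmetric_rotation_pair[OF A sym x y parts(1,2) nonzero])
  then have "A *\<^sub>v x = Re z \<cdot>\<^sub>v x" "A *\<^sub>v y = Re z \<cdot>\<^sub>v y"
    using parts(1,2) x y by auto
  then show ?thesis using nonzero x y by blast
qed

lemma orthonormal_columns:
  fixes us :: "'a::comm_ring_1 vec list"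
  assumes len: "length us = n" and carrier: "\<And>i. i < n \<Longrightarrow> us ! i \<in> carrier_vec n"
    and orthonormal: "\<And>i j. i < n \<Longrightarrow> j < n \<Longrightarrow> us ! i \<bullet> us ! j = (if i = j then 1 else 0)"
  shows "transpose_mat (mat_of_cols n us) * mat_of_cols n us = 1\<^sub>m n"
proof (rule eq_matI)
  fix i j assume "i < dim_row (1\<^sub>m n :: 'a mat)" "j < dim_col (1\<^sub>m n :: 'a mat)"
  then show "(transpose_mat (mat_of_cols n us) * mat_of_cols n us) $$ (i, j) = 1\<^sub>m n $$ (i, j)"
    using len carrier by (simp add: orthonormal)
qed (use len in auto)

text \<open>Every nonzero real vector is, up to a scalar, the first column of an orthogonal matrix
  (basis completion followed by Gram--Schmidt and normalisation).\<close>
lemma orthogonal_matrix_with_first_column: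
  fixes v :: "real vec"
  assumes v: "v \<in> carrier_vec n" "v \<noteq> 0\<^sub>v n"
  shows "\<exists>W c. W \<in> carrier_mat n n \<and> transpose_mat W * W = 1\<^sub>m n \<and> col W 0 = c \<cdot>\<^sub>v v"
proof -
  interpret cof_vec_space n "TYPE(real)" .
  define bs where "bs = basis_completion v"
  note bc = basis_completion[OF v, folded bs_def]
  define ws where "ws = gram_schmidt n bs"
  note gs = gram_schmidt_result[OF bc(2) bc(4) bc(5) ws_def]
  have n: "n > 0" using v by (cases n) auto
  have lws: "length ws = n" using gs bc by simp
  have wsc: "\<And>i. i < n \<Longrightarrow> ws ! i \<in> carrier_vec n" using gs lws by auto
  from bc(6,7) n obtain vs where "bs = v # vs" by (cases bs) auto
  then have "hd ws = v" using gram_schmidt_hd[OF v(1), of vs] unfolding ws_def by simp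
  moreover have "ws \<noteq> []" using lws n by auto
  ultimately have hdws: "ws ! 0 = v" by (simp add: hd_conv_nth)
  have orth: "\<And>i j. i < n \<Longrightarrow> j < n \<Longrightarrow> ws ! i \<bullet> ws ! j = 0 \<longleftrightarrow> i \<noteq> j"
    using corthogonalD[OF gs(2)] lws by simp
  have sqpos: "ws ! i \<bullet> ws ! i > 0" if i: "i < n" for i
    using conjugate_square_ge_0_vec[of "ws ! i"] orth[OF i i] by simp
  define normalise where "normalise = (\<lambda>w::real vec. (1 / sqrt (w \<bullet> w)) \<cdot>\<^sub>v w)"
  define us where "us = map normalise ws"
  have lus: "length us = n" unfolding us_def using lws by simp
  have usc: "\<And>i. i < n \<Longrightarrow> us ! i \<in> carrier_vec n"
    unfolding us_def normalise_def using wsc lws by simp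
  have orthonormal: "us ! i \<bullet> us ! j = (if i = j then 1 else 0)" if i: "i < n" and j: "j < n" for i j
  proof -
    have "us ! i \<bullet> us ! j
          = (1 / sqrt (ws ! i \<bullet> ws ! i)) * (1 / sqrt (ws ! j \<bullet> ws ! j)) * (ws ! i \<bullet> ws ! j)"
      unfolding us_def normalise_def using i j lws wsc[OF i] wsc[OF j] by simp
    then show ?thesis using orth[OF i j] sqpos[OF i] by (auto simp: field_simps)
  qed
  define W where "W = mat_of_cols n us"
  have W: "W \<in> carrier_mat n n" unfolding W_def using lus by (metis mat_of_cols_carrier(1))
  have colW: "\<And>j. j < n \<Longrightarrow> col W j = us ! j" unfolding W_def using lus usc by simp
  have "transpose_mat W * W = 1\<^sub>m n"
    unfolding W_def by (rule orthonormal_columns[OF lus usc orthonormal])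
  moreover have "col W 0 = (1 / sqrt (v \<bullet> v)) \<cdot>\<^sub>v v"
    using colW[OF n] hdws lws n unfolding us_def normalise_def by simp
  ultimately show ?thesis using W by blast
qed

lemma conjugation_entries:
  fixes A W :: "'a::comm_ring_1 mat"
  assumes A: "A \<in> carrier_mat n n" and W: "W \<in> carrier_mat n n" and sym: "transpose_mat A = A"
  shows "\<And>i j. i < n \<Longrightarrow> j < n \<Longrightarrow> (transpose_mat W * A * W) $$ (i,j) = col W i \<bullet> (A *\<^sub>v col W j)"
    and "\<And>i j. i < n \<Longrightarrow> j < n \<Longrightarrow> (transpose_mat W * A * W) $$ (i,j) = (transpose_mat W * A * W) $$ (j,i)"
proof -
  have colc: "\<And>j. col W j \<in> carrier_vec n" using W by (metis carrier_matD(1) col_dim)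
  show entry: "(transpose_mat W * A * W) $$ (i,j) = col W i \<bullet> (A *\<^sub>v col W j)"
    if "i < n" "j < n" for i j
  proof -
    have "transpose_mat W * A * W = transpose_mat W * (A * W)"
      by (rule assoc_mult_mat[of _ n n _ n _ n]) (use W A in auto)
    then have "(transpose_mat W * A * W) $$ (i,j) = row (transpose_mat W) i \<bullet> col (A * W) j"
      using that W A by simp
    also have "row (transpose_mat W) i = col W i" using that W by simp
    also have "col (A * W) j = A *\<^sub>v col W j" using col_mult2[OF A W, of j] that by simp
    finally show ?thesis .
  qed
  fix i j assume i: "i < n" and j: "j < n"
  have "(transpose_mat A *\<^sub>v col W i) \<bullet> col W j = col W i \<bullet> (A *\<^sub>v col W j)"
    using A colc by (intro transpose_vec_mult_scalar) auto
  moreover have "(A *\<^sub>v col W i) \<bullet> col W j = col W j \<bullet> (A *\<^sub>v col W i)"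
    using A colc by (intro comm_scalar_prod[of _ n]) auto
  ultimately show "(transpose_mat W * A * W) $$ (i,j) = (transpose_mat W * A * W) $$ (j,i)"
    using sym entry i j by simp
qed

lemma symmetric_deflation:
  fixes A W :: "real mat"
  assumes A: "A \<in> carrier_mat (Suc m) (Suc m)" and sym: "transpose_mat A = A"
    and W: "W \<in> carrier_mat (Suc m) (Suc m)" and WtW: "transpose_mat W * W = 1\<^sub>m (Suc m)"
    and eigen: "A *\<^sub>v col W 0 = e \<cdot>\<^sub>v col W 0"
  shows "\<exists>A3. A3 \<in> carrier_mat m m \<and> transpose_mat A3 = A3 \<and>
           transpose_mat W * A * W = four_block_mat (mat 1 1 (\<lambda>_. e)) (0\<^sub>m 1 m) (0\<^sub>m m 1) A3"
proof -
  define n where "n = Suc m"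
  define A' where "A' = transpose_mat W * A * W"
  have A'c: "A' \<in> carrier_mat n n" unfolding A'_def n_def using W A by simp
  have colc: "\<And>j. col W j \<in> carrier_vec n" using W unfolding n_def by (metis carrier_matD(1) col_dim)
  have entry: "A' $$ (i,j) = col W i \<bullet> (A *\<^sub>v col W j)" if "i < n" "j < n" for i j
    unfolding A'_def using conjugation_entries(1)[OF A W sym] that unfolding n_def by blast
  have A'sym: "A' $$ (i,j) = A' $$ (j,i)" if "i < n" "j < n" for i j
    unfolding A'_def using conjugation_entries(2)[OF A W sym] that unfolding n_def by blast
  have ortho: "col W i \<bullet> col W j = (if i = j then 1 else 0)" if "i < n" "j < n" for i j
    using arg_cong[OF WtW, of "\<lambda>B. B $$ (i,j)"] that W unfolding n_def by simp
  have A'col0: "A' $$ (i,0) = (if i = 0 then e else 0)" if i: "i < n" for i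
    using entry[OF i, of 0] ortho[OF i, of 0] eigen colc i unfolding n_def by simp
  define A3 where "A3 = mat m m (\<lambda>(i,j). A' $$ (Suc i, Suc j))"
  have "A' = four_block_mat (mat 1 1 (\<lambda>_. e)) (0\<^sub>m 1 m) (0\<^sub>m m 1) A3"
  proof (rule eq_matI)
    fix i j assume "i < dim_row (four_block_mat (mat 1 1 (\<lambda>_. e)) (0\<^sub>m 1 m) (0\<^sub>m m 1) A3)"
      "j < dim_col (four_block_mat (mat 1 1 (\<lambda>_. e)) (0\<^sub>m 1 m) (0\<^sub>m m 1) A3)"
    then have i: "i < n" and j: "j < n" unfolding A3_def n_def by auto
    show "A' $$ (i, j) = four_block_mat (mat 1 1 (\<lambda>_. e)) (0\<^sub>m 1 m) (0\<^sub>m m 1) A3 $$ (i, j)"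
      using A'col0[OF i] A'col0[OF j] A'sym[OF i j] i j
      by (cases i; cases j) (auto simp: A3_def n_def)
  qed (use A'c in \<open>auto simp: A3_def n_def\<close>)
  moreover have "transpose_mat A3 = A3"
    unfolding A3_def by (rule eq_matI) (auto simp: n_def intro: A'sym)
  moreover have "A3 \<in> carrier_mat m m" unfolding A3_def by simp
  ultimately show ?thesis unfolding A'_def by blast
qed

lemma orthogonal_block_extension:
  fixes U3 :: "real mat"
  assumes U3: "U3 \<in> carrier_mat m m" "transpose_mat U3 * U3 = 1\<^sub>m m"
  defines "B \<equiv> four_block_mat (1\<^sub>m 1) (0\<^sub>m 1 m) (0\<^sub>m m 1) U3"
  shows "B \<in> carrier_mat (Suc m) (Suc m)" and "transpose_mat B * B = 1\<^sub>m (Suc m)"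
    and "B * mat_diag (Suc m) (\<lambda>i. if i = 0 then e else d3 (i - 1)) * transpose_mat B
         = four_block_mat (mat 1 1 (\<lambda>_. e)) (0\<^sub>m 1 m) (0\<^sub>m m 1) (U3 * mat_diag m d3 * transpose_mat U3)"
proof -
  define E1 where "E1 = (mat 1 1 (\<lambda>_. e) :: real mat)"
  have c11: "(1\<^sub>m 1 :: real mat) \<in> carrier_mat 1 1" and c1m: "(0\<^sub>m 1 m :: real mat) \<in> carrier_mat 1 m"
    and cm1: "(0\<^sub>m m 1 :: real mat) \<in> carrier_mat m 1" and U3t: "transpose_mat U3 \<in> carrier_mat m m"
    and D3c: "mat_diag m d3 \<in> carrier_mat m m" and UD3: "U3 * mat_diag m d3 \<in> carrier_mat m m"
    and E1c: "E1 \<in> carrier_mat 1 1"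
    using U3 unfolding E1_def by auto
  show "B \<in> carrier_mat (Suc m) (Suc m)" unfolding B_def using U3 by auto
  have Bt: "transpose_mat B = four_block_mat (1\<^sub>m 1) (0\<^sub>m 1 m) (0\<^sub>m m 1) (transpose_mat U3)"
    unfolding B_def by (subst transpose_four_block_mat) (use U3 in auto)
  show "transpose_mat B * B = 1\<^sub>m (Suc m)"
    unfolding Bt unfolding B_def
    by (subst mult_four_block_mat[OF c11 c1m cm1 U3t c11 c1m cm1 U3(1)]) (use U3 in auto)
  have "mat_diag (Suc m) (\<lambda>i. if i = 0 then e else d3 (i - 1))
        = four_block_mat E1 (0\<^sub>m 1 m) (0\<^sub>m m 1) (mat_diag m d3)"
    by (rule eq_matI) (auto simp: mat_diag_def E1_def)
  then have "B * mat_diag (Suc m) (\<lambda>i. if i = 0 then e else d3 (i - 1))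
             = four_block_mat E1 (0\<^sub>m 1 m) (0\<^sub>m m 1) (U3 * mat_diag m d3)"
    unfolding B_def
    by (simp only:, subst mult_four_block_mat[OF c11 c1m cm1 U3(1) E1c c1m cm1 D3c])
      (use U3 E1c D3c in \<open>auto simp: E1_def left_mult_zero_mat[OF D3c]\<close>)
  then show "B * mat_diag (Suc m) (\<lambda>i. if i = 0 then e else d3 (i - 1)) * transpose_mat B
         = four_block_mat (mat 1 1 (\<lambda>_. e)) (0\<^sub>m 1 m) (0\<^sub>m m 1) (U3 * mat_diag m d3 * transpose_mat U3)"
    unfolding Bt E1_def[symmetric]
    by (simp only:, subst mult_four_block_mat[OF E1c c1m cm1 UD3 c11 c1m cm1 U3t])
      (use U3 E1c UD3 in \<open>auto simp: E1_def right_mult_zero_mat[OF UD3]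
        left_add_zero_mat[OF mult_carrier_mat[OF UD3 U3t]]\<close>)
qed

lemma orthogonal_conjugation_compose:
  fixes A W B D :: "real mat"
  assumes A: "A \<in> carrier_mat n n" and W: "W \<in> carrier_mat n n" and B: "B \<in> carrier_mat n n"
    and D: "D \<in> carrier_mat n n"
    and WtW: "transpose_mat W * W = 1\<^sub>m n" and BtB: "transpose_mat B * B = 1\<^sub>m n"
    and BDB: "B * D * transpose_mat B = transpose_mat W * A * W"
  shows "transpose_mat (W * B) * (W * B) = 1\<^sub>m n"
    and "A = (W * B) * D * transpose_mat (W * B)"
proof -
  have Wt: "transpose_mat W \<in> carrier_mat n n" and Bt: "transpose_mat B \<in> carrier_mat n n"
    using W B by auto
  have WWt: "W * transpose_mat W = 1\<^sub>m n" by (rule mat_mult_left_right_inverse[OF Wt W WtW])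
  have WBt: "transpose_mat (W * B) = transpose_mat B * transpose_mat W" by (rule transpose_mult[OF W B])
  have "transpose_mat (W * B) * (W * B) = transpose_mat B * ((transpose_mat W * W) * B)"
    unfolding WBt using W B Wt Bt by (simp add: assoc_mult_mat[of _ n n _ n _ n] mult_carrier_mat[of _ n n _ n])
  then show "transpose_mat (W * B) * (W * B) = 1\<^sub>m n" unfolding WtW using B BtB by simp
  have "(W * B) * D * transpose_mat (W * B) = W * (B * D * transpose_mat B) * transpose_mat W"
    unfolding WBt using W B D Wt Bt by (simp add: assoc_mult_mat[of _ n n _ n _ n] mult_carrier_mat[of _ n n _ n])
  also have "\<dots> = (W * transpose_mat W) * A * (W * transpose_mat W)"
    unfolding BDB using W A Wt by (simp add: assoc_mult_mat[of _ n n _ n _ n] mult_carrier_mat[of _ n n _ n])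
  finally show "A = (W * B) * D * transpose_mat (W * B)" unfolding WWt using A by simp
qed

text \<open>Spectral theorem for real symmetric matrices: \<open>A = U D U\<^sup>T\<close> with \<open>U\<close> orthogonal and
  \<open>D\<close> diagonal, by induction on the dimension via deflation.\<close>
theorem real_symmetric_spectral:
  fixes A :: "real mat"
  assumes "A \<in> carrier_mat n n" "transpose_mat A = A"
  shows "\<exists>U d. U \<in> carrier_mat n n \<and> transpose_mat U * U = 1\<^sub>m n
               \<and> A = U * mat_diag n d * transpose_mat U"
  using assms
proof (induction n arbitrary: A)
  case 0
  then show ?case
    by (intro exI[of _ "1\<^sub>m 0"] exI[of _ "\<lambda>_. 0"]) (auto simp: mat_eq_iff)
next
  case (Suc m)
  have A: "A \<in> carrier_mat (Suc m) (Suc m)" and sym: "transpose_mat A = A" using Suc.prems by auto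
  obtain e v where v: "v \<in> carrier_vec (Suc m)" "v \<noteq> 0\<^sub>v (Suc m)" and ev: "A *\<^sub>v v = e \<cdot>\<^sub>v v"
    using real_symmetric_eigenvector[OF A sym] by auto
  obtain W c where W: "W \<in> carrier_mat (Suc m) (Suc m)" and WtW: "transpose_mat W * W = 1\<^sub>m (Suc m)"
      and colW: "col W 0 = c \<cdot>\<^sub>v v"
    using orthogonal_matrix_with_first_column[OF v] by blast
  have "A *\<^sub>v col W 0 = e \<cdot>\<^sub>v col W 0"
    unfolding colW using mult_mat_vec[OF A v(1)] ev v by (simp add: smult_smult_assoc mult.commute)
  then obtain A3 where A3: "A3 \<in> carrier_mat m m" "transpose_mat A3 = A3"
      and blocks: "transpose_mat W * A * W = four_block_mat (mat 1 1 (\<lambda>_. e)) (0\<^sub>m 1 m) (0\<^sub>m m 1) A3"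
    using symmetric_deflation[OF A sym W WtW] by blast
  obtain U3 d3 where U3: "U3 \<in> carrier_mat m m" "transpose_mat U3 * U3 = 1\<^sub>m m"
      and A3_diag: "A3 = U3 * mat_diag m d3 * transpose_mat U3"
    using Suc.IH[OF A3] by blast
  define B where "B = four_block_mat (1\<^sub>m 1) (0\<^sub>m 1 m) (0\<^sub>m m 1) U3"
  define d where "d = (\<lambda>i. if i = 0 then e else d3 (i - 1))"
  note B = orthogonal_block_extension(1,2)[OF U3, folded B_def]
  have "B * mat_diag (Suc m) d * transpose_mat B = transpose_mat W * A * W"
    unfolding blocks A3_diag B_def d_def by (rule orthogonal_block_extension(3)[OF U3])
  from orthogonal_conjugation_compose[OF A W B(1) mat_diag_dim WtW B(2) this]
  show ?case using W B(1) by (intro exI[of _ "W * B"] exI[of _ d]) auto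
qed

lemma real_symmetric_eigenbasis:
  fixes A :: "real mat"
  assumes A: "A \<in> carrier_mat n n" and sym: "transpose_mat A = A"
  shows "\<exists>U d. U \<in> carrier_mat n n \<and> transpose_mat U * U = 1\<^sub>m n \<and> U * transpose_mat U = 1\<^sub>m n \<and>
           (\<forall>k<n. A *\<^sub>v col U k = d k \<cdot>\<^sub>v col U k)"
proof -
  obtain U d where U: "U \<in> carrier_mat n n" and UtU: "transpose_mat U * U = 1\<^sub>m n"
    and AU: "A = U * mat_diag n d * transpose_mat U"
    using real_symmetric_spectral[OF A sym] by blast
  have Ut: "transpose_mat U \<in> carrier_mat n n" using U by simp
  have UUt: "U * transpose_mat U = 1\<^sub>m n" by (rule mat_mult_left_right_inverse[OF Ut U UtU])
  have "A * U = U * mat_diag n d * (transpose_mat U * U)"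
    unfolding AU using U Ut by (simp add: assoc_mult_mat[of _ n n _ n _ n] mult_carrier_mat[of _ n n _ n])
  also have "\<dots> = mat n n (\<lambda>(i,j). U $$ (i,j) * d j)"
    unfolding UtU using U by (simp add: mat_diag_mult_right)
  finally have AU': "A * U = mat n n (\<lambda>(i,j). U $$ (i,j) * d j)" .
  have "A *\<^sub>v col U k = d k \<cdot>\<^sub>v col U k" if k: "k < n" for k
  proof -
    have "A *\<^sub>v col U k = col (A * U) k" by (rule col_mult2[OF A U k, symmetric])
    also have "\<dots> = d k \<cdot>\<^sub>v col U k" unfolding AU' using k U by (intro eq_vecI) auto
    finally show ?thesis .
  qed
  then show ?thesis using U UtU UUt by blast
qed

lemma (in semiring_hom) scalar_prod_hom:
  "dim_vec v = dim_vec w \<Longrightarrow> hom (v \<bullet> w) = vec\<^sub>h v \<bullet> vec\<^sub>h w"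
  unfolding scalar_prod_def by (simp add: hom_sum hom_mult)

lemma smult_one_mat_mult_vec:
  fixes v :: "'a::comm_ring_1 vec"
  assumes v: "v \<in> carrier_vec n"
  shows "(c \<cdot>\<^sub>m 1\<^sub>m n) *\<^sub>v v = c \<cdot>\<^sub>v v"
proof (rule eq_vecI)
  fix i assume "i < dim_vec (c \<cdot>\<^sub>v v)"
  then have i: "i < n" using v by simp
  have "((c \<cdot>\<^sub>m 1\<^sub>m n) *\<^sub>v v) $ i = (\<Sum>j\<in>{0..<n}. c * (if j = i then 1 else 0) * v $ j)"
    using i v by (simp add: scalar_prod_def)
  also have "\<dots> = (\<Sum>j\<in>{0..<n}. if j = i then c * v $ j else 0)" by (rule sum.cong) auto
  also have "\<dots> = c * v $ i" using i by simp
  finally show "((c \<cdot>\<^sub>m 1\<^sub>m n) *\<^sub>v v) $ i = (c \<cdot>\<^sub>v v) $ i" using i v by simp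
qed (use v in simp)

lemma parseval:
  fixes U :: "'a::comm_ring_1 mat"
  assumes U: "U \<in> carrier_mat n n" and UUt: "U * transpose_mat U = 1\<^sub>m n"
    and b: "b \<in> carrier_vec n" and y: "y \<in> carrier_vec n"
  shows "b \<bullet> y = (\<Sum>k<n. (col U k \<bullet> b) * (col U k \<bullet> y))"
proof -
  have Ut: "transpose_mat U \<in> carrier_mat n n" using U by simp
  have "b \<bullet> y = b \<bullet> (U *\<^sub>v (transpose_mat U *\<^sub>v y))"
    using U Ut y by (simp flip: assoc_mult_mat_vec add: UUt)
  also have "\<dots> = (transpose_mat U *\<^sub>v b) \<bullet> (transpose_mat U *\<^sub>v y)"
    by (rule transpose_vec_mult_scalar[OF U _ b, symmetric]) (use Ut y in simp)
  also have "\<dots> = (\<Sum>k\<in>{0..<n}. (col U k \<bullet> b) * (col U k \<bullet> y))"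
    unfolding scalar_prod_def[of "transpose_mat U *\<^sub>v b"] using U by (intro sum.cong) auto
  finally show ?thesis by (simp add: atLeast0LessThan)
qed

text \<open>With \<open>M = sI - A\<close> and \<open>X = adj M\<close> this is the partial fraction expansion of
  \<open>b\<^sup>T (sI - A)\<^sup>-\<^sup>1 b\<close> with the denominators cleared.\<close>
lemma quadratic_form_in_eigenbasis:
  fixes M X U :: "'a::field mat" and b :: "'a vec"
  assumes M: "M \<in> carrier_mat n n" and X: "X \<in> carrier_mat n n" and sym: "transpose_mat M = M"
    and MX: "M * X = \<delta> \<cdot>\<^sub>m 1\<^sub>m n"
    and U: "U \<in> carrier_mat n n" and UUt: "U * transpose_mat U = 1\<^sub>m n"
    and eigen: "\<And>k. k < n \<Longrightarrow> M *\<^sub>v col U k = \<mu> k \<cdot>\<^sub>v col U k"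
    and b: "b \<in> carrier_vec n"
  shows "(b \<bullet> (X *\<^sub>v b)) * (\<Prod>k<n. \<mu> k) = (\<Sum>k<n. (col U k \<bullet> b)\<^sup>2 * (\<Prod>j\<in>{..<n}-{k}. \<mu> j)) * \<delta>"
proof -
  define y where "y = X *\<^sub>v b"
  define u where "u = col U"
  have y: "y \<in> carrier_vec n" unfolding y_def using X b by simp
  have u: "u k \<in> carrier_vec n" for k unfolding u_def using U by (metis carrier_matD(1) col_dim)
  have My: "M *\<^sub>v y = \<delta> \<cdot>\<^sub>v b"
  proof -
    have "M *\<^sub>v y = (M * X) *\<^sub>v b" unfolding y_def using M X b by simp
    also have "\<dots> = \<delta> \<cdot>\<^sub>v b" unfolding MX using b by (rule smult_one_mat_mult_vec)
    finally show ?thesis .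
  qed
  have coord: "\<mu> k * (u k \<bullet> y) = \<delta> * (u k \<bullet> b)" if k: "k < n" for k
  proof -
    have "(transpose_mat M *\<^sub>v u k) \<bullet> y = u k \<bullet> (M *\<^sub>v y)"
      by (rule transpose_vec_mult_scalar[OF M y u])
    moreover have "M *\<^sub>v u k = \<mu> k \<cdot>\<^sub>v u k" using eigen[OF k] unfolding u_def .
    ultimately show ?thesis unfolding sym My using u[of k] y b by simp
  qed
  have parseval: "b \<bullet> y = (\<Sum>k<n. (u k \<bullet> b) * (u k \<bullet> y))"
    unfolding u_def by (rule parseval[OF U UUt b y])
  have "(b \<bullet> y) * (\<Prod>k<n. \<mu> k) = (\<Sum>k<n. (u k \<bullet> b) * (u k \<bullet> y) * (\<Prod>j<n. \<mu> j))"
    unfolding parseval by (simp add: sum_distrib_right)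
  also have "\<dots> = (\<Sum>k<n. (u k \<bullet> b)\<^sup>2 * (\<Prod>j\<in>{..<n}-{k}. \<mu> j) * \<delta>)"
  proof (rule sum.cong[OF refl])
    fix k assume "k \<in> {..<n}"
    then have k: "k < n" by simp
    have "(\<Prod>j<n. \<mu> j) = \<mu> k * (\<Prod>j\<in>{..<n}-{k}. \<mu> j)" using k by (intro prod.remove) auto
    then show "(u k \<bullet> b) * (u k \<bullet> y) * (\<Prod>j<n. \<mu> j) = (u k \<bullet> b)\<^sup>2 * (\<Prod>j\<in>{..<n}-{k}. \<mu> j) * \<delta>"
      using coord[OF k] by (simp add: power2_eq_square algebra_simps)
  qed
  finally show ?thesis unfolding y_def u_def by (simp add: sum_distrib_right)
qed

lemma stable_real_eigenvalue_negative:
  fixes A :: "real mat"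
  assumes A: "A \<in> carrier_mat n n"
    and stable: "\<forall>k. eigenvalue (map_mat complex_of_real A) k \<longrightarrow> Re k < 0"
    and v: "v \<in> carrier_vec n" "v \<noteq> 0\<^sub>v n" and Av: "A *\<^sub>v v = e \<cdot>\<^sub>v v"
  shows "e < 0"
proof -
  define vc where "vc = map_vec complex_of_real v"
  have "map_mat complex_of_real A *\<^sub>v vc = map_vec complex_of_real (A *\<^sub>v v)"
    unfolding vc_def by (rule of_real_hom.mult_mat_vec_hom[OF A v(1), symmetric])
  also have "\<dots> = complex_of_real e \<cdot>\<^sub>v vc" unfolding Av vc_def by (rule of_real_hom.vec_hom_smult)
  finally have "eigenvector (map_mat complex_of_real A) vc (complex_of_real e)"
    unfolding eigenvector_def vc_def using A v by auto
  then show ?thesis using stable unfolding eigenvalue_def by fastforce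
qed

lemma complexified_eigenbasis:
  fixes A U :: "real mat"
  assumes A: "A \<in> carrier_mat n n" and U: "U \<in> carrier_mat n n"
    and UUt: "U * transpose_mat U = 1\<^sub>m n"
    and ev: "\<And>k. k < n \<Longrightarrow> A *\<^sub>v col U k = d k \<cdot>\<^sub>v col U k"
  defines "Uc \<equiv> map_mat complex_of_real U"
  shows "Uc * transpose_mat Uc = 1\<^sub>m n"
    and "k < n \<Longrightarrow> map_mat complex_of_real A *\<^sub>v col Uc k = complex_of_real (d k) \<cdot>\<^sub>v col Uc k"
    and "k < n \<Longrightarrow> v \<in> carrier_vec n \<Longrightarrow> col Uc k \<bullet> map_vec complex_of_real v = complex_of_real (col U k \<bullet> v)"
proof -
  have colU: "col U k \<in> carrier_vec n" for k using U by (metis carrier_matD(1) col_dim)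
  have "map_mat complex_of_real (U * transpose_mat U) = Uc * transpose_mat Uc"
    unfolding Uc_def map_mat_transpose by (rule of_real_hom.mat_hom_mult[OF U]) (use U in simp)
  then show "Uc * transpose_mat Uc = 1\<^sub>m n" unfolding UUt by (simp add: of_real_hom.mat_hom_one)
  assume k: "k < n"
  then have colUc: "col Uc k = map_vec complex_of_real (col U k)" unfolding Uc_def using U by simp
  have "map_mat complex_of_real A *\<^sub>v col Uc k = map_vec complex_of_real (A *\<^sub>v col U k)"
    unfolding colUc by (rule of_real_hom.mult_mat_vec_hom[OF A colU, symmetric])
  then show "map_mat complex_of_real A *\<^sub>v col Uc k = complex_of_real (d k) \<cdot>\<^sub>v col Uc k"
    unfolding ev[OF k] colUc by (simp add: of_real_hom.vec_hom_smult)
  show "col Uc k \<bullet> map_vec complex_of_real v = complex_of_real (col U k \<bullet> v)" if "v \<in> carrier_vec n"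
    unfolding colUc by (subst of_real_hom.scalar_prod_hom) (use colU that U in simp_all)
qed

lemma eval_char_poly_matrix:
  assumes "A \<in> carrier_mat n n"
  shows "map_mat (\<lambda>p. poly p x) (char_poly_matrix A) = x \<cdot>\<^sub>m 1\<^sub>m n - A"
  using assms by (intro eq_matI) (auto simp: char_poly_matrix_def)

lemma shifted_matrix_eigenbasis:
  fixes A U :: "'a::field mat"
  assumes A: "A \<in> carrier_mat n n" and sym: "transpose_mat A = A" and U: "U \<in> carrier_mat n n"
    and ev: "\<And>k. k < n \<Longrightarrow> A *\<^sub>v col U k = \<mu> k \<cdot>\<^sub>v col U k"
  shows "transpose_mat (\<sigma> \<cdot>\<^sub>m 1\<^sub>m n - A) = \<sigma> \<cdot>\<^sub>m 1\<^sub>m n - A"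
    and "\<And>k. k < n \<Longrightarrow> (\<sigma> \<cdot>\<^sub>m 1\<^sub>m n - A) *\<^sub>v col U k = (\<sigma> - \<mu> k) \<cdot>\<^sub>v col U k"
proof -
  show "transpose_mat (\<sigma> \<cdot>\<^sub>m 1\<^sub>m n - A) = \<sigma> \<cdot>\<^sub>m 1\<^sub>m n - A"
  proof (rule eq_matI)
    fix i j assume "i < dim_row (\<sigma> \<cdot>\<^sub>m 1\<^sub>m n - A)" "j < dim_col (\<sigma> \<cdot>\<^sub>m 1\<^sub>m n - A)"
    then have "i < n" "j < n" using A by auto
    then show "transpose_mat (\<sigma> \<cdot>\<^sub>m 1\<^sub>m n - A) $$ (i, j) = (\<sigma> \<cdot>\<^sub>m 1\<^sub>m n - A) $$ (i, j)"
      using arg_cong[OF sym, of "\<lambda>B. B $$ (i,j)"] A by simp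
  qed (use A in auto)
  fix k assume k: "k < n"
  have u: "col U k \<in> carrier_vec n" using U by (metis carrier_matD(1) col_dim)
  have "(\<sigma> \<cdot>\<^sub>m 1\<^sub>m n - A) *\<^sub>v col U k = \<sigma> \<cdot>\<^sub>v col U k - \<mu> k \<cdot>\<^sub>v col U k"
    using A u by (simp add: minus_mult_distrib_mat_vec[of _ n n] smult_one_mat_mult_vec ev[OF k])
  also have "\<dots> = (\<sigma> - \<mu> k) \<cdot>\<^sub>v col U k" by (intro eq_vecI) (auto simp: algebra_simps)
  finally show "(\<sigma> \<cdot>\<^sub>m 1\<^sub>m n - A) *\<^sub>v col U k = (\<sigma> - \<mu> k) \<cdot>\<^sub>v col U k" .
qed

text \<open>The transfer function numerator \<open>b\<^sup>T adj(sI - A) b\<close> of a symmetric \<open>A\<close> with orthonormal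
  eigenbasis \<open>u\<^sub>k\<close>: clearing denominators in \<open>b\<^sup>T (sI - A)\<^sup>-\<^sup>1 b = \<Sum>\<^sub>k (u\<^sub>k\<^sup>T b)\<^sup>2 / (s - \<mu>\<^sub>k)\<close>.
  Proved by evaluating at every point \<open>s\<close> and applying the previous identity there.\<close>
lemma adjugate_quadratic_form:
  fixes A U :: "'a::field_char_0 mat" and b :: "'a vec"
  assumes A: "A \<in> carrier_mat n n" and sym: "transpose_mat A = A"
    and U: "U \<in> carrier_mat n n" and UUt: "U * transpose_mat U = 1\<^sub>m n"
    and ev: "\<And>k. k < n \<Longrightarrow> A *\<^sub>v col U k = \<mu> k \<cdot>\<^sub>v col U k"
    and b: "b \<in> carrier_vec n"
  defines "M \<equiv> char_poly_matrix A" and "bp \<equiv> map_vec (\<lambda>x. [:x:]) b"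
  shows "(bp \<bullet> (adj_mat M *\<^sub>v bp)) * (\<Prod>k<n. [:- \<mu> k, 1:])
           = (\<Sum>k<n. [:(col U k \<bullet> b)\<^sup>2:] * (\<Prod>j\<in>{..<n}-{k}. [:- \<mu> j, 1:])) * det M"
proof (rule poly_eq_poly_eq_iff[THEN iffD1], rule ext)
  fix \<sigma> :: 'a
  have Mc: "M \<in> carrier_mat n n" unfolding M_def using A by simp
  note adj = adj_mat[OF Mc]
  have hom: "semiring_hom (\<lambda>p::'a poly. poly p \<sigma>)" by unfold_locales auto
  define Ms where "Ms = map_mat (\<lambda>p. poly p \<sigma>) M"
  define X where "X = map_mat (\<lambda>p. poly p \<sigma>) (adj_mat M)"
  have Ms: "Ms = \<sigma> \<cdot>\<^sub>m 1\<^sub>m n - A" unfolding Ms_def M_def by (rule eval_char_poly_matrix[OF A])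
  have Msc: "Ms \<in> carrier_mat n n" and Xc: "X \<in> carrier_mat n n"
    unfolding Ms_def X_def using Mc adj by auto
  have MsX: "Ms * X = poly (det M) \<sigma> \<cdot>\<^sub>m 1\<^sub>m n"
  proof -
    have "Ms * X = map_mat (\<lambda>p. poly p \<sigma>) (M * adj_mat M)"
      unfolding Ms_def X_def by (rule semiring_hom.mat_hom_mult[OF hom Mc adj(1), symmetric])
    also have "\<dots> = poly (det M) \<sigma> \<cdot>\<^sub>m 1\<^sub>m n" unfolding adj(2) by (rule eq_matI) auto
    finally show ?thesis .
  qed
  note shifted = shifted_matrix_eigenbasis[OF A sym U ev, where \<sigma> = \<sigma>, folded Ms]
  have "poly (bp \<bullet> (adj_mat M *\<^sub>v bp)) \<sigma> = b \<bullet> (X *\<^sub>v b)"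
  proof -
    have bpb: "map_vec (\<lambda>p. poly p \<sigma>) bp = b" unfolding bp_def by (rule eq_vecI) auto
    have bpc: "bp \<in> carrier_vec n" unfolding bp_def using b by simp
    have "poly (bp \<bullet> (adj_mat M *\<^sub>v bp)) \<sigma>
          = map_vec (\<lambda>p. poly p \<sigma>) bp \<bullet> map_vec (\<lambda>p. poly p \<sigma>) (adj_mat M *\<^sub>v bp)"
      by (rule semiring_hom.scalar_prod_hom[OF hom]) (use bpc adj in simp)
    also have "map_vec (\<lambda>p. poly p \<sigma>) (adj_mat M *\<^sub>v bp) = X *\<^sub>v b"
      unfolding X_def bpb[symmetric] by (rule semiring_hom.mult_mat_vec_hom[OF hom adj(1) bpc])
    finally show ?thesis unfolding bpb .
  qed
  moreover have "b \<bullet> (X *\<^sub>v b) * (\<Prod>k<n. \<sigma> - \<mu> k)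
      = (\<Sum>k<n. (col U k \<bullet> b)\<^sup>2 * (\<Prod>j\<in>{..<n}-{k}. \<sigma> - \<mu> j)) * poly (det M) \<sigma>"
    by (rule quadratic_form_in_eigenbasis[OF Msc Xc shifted(1) MsX U UUt shifted(2) b])
  ultimately show "poly ((bp \<bullet> (adj_mat M *\<^sub>v bp)) * (\<Prod>k<n. [:- \<mu> k, 1:])) \<sigma>
      = poly ((\<Sum>k<n. [:(col U k \<bullet> b)\<^sup>2:] * (\<Prod>j\<in>{..<n}-{k}. [:- \<mu> j, 1:])) * det M) \<sigma>"
    by (simp add: poly_sum poly_prod)
qed

text \<open>Partial fraction form of an SSS transfer function: its poles are the (negative)
  eigenvalues \<open>d\<^sub>k\<close> of \<open>A\<close>, with nonnegative residues \<open>(u\<^sub>k\<^sup>T b)\<^sup>2\<close>.\<close>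
lemma sss_tf_partial_fractions:
  assumes SSS: "is_SSS n A b"
  shows "\<exists>w d. (\<forall>k<n. d k < 0 \<and> w k \<ge> 0) \<and>
           sss_tf A b = (\<Sum>k<n. const_fract (w k) / pole_fract (d k))"
proof -
  have A: "A \<in> carrier_mat n n" and b: "b \<in> carrier_vec n" and sym: "transpose_mat A = A"
    and stable: "\<forall>k. eigenvalue (map_mat complex_of_real A) k \<longrightarrow> Re k < 0"
    using SSS unfolding is_SSS_def by auto
  obtain U d where U: "U \<in> carrier_mat n n" and UtU: "transpose_mat U * U = 1\<^sub>m n"
    and UUt: "U * transpose_mat U = 1\<^sub>m n" and ev: "\<And>k. k < n \<Longrightarrow> A *\<^sub>v col U k = d k \<cdot>\<^sub>v col U k"
    using real_symmetric_eigenbasis[OF A sym] by blast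
  have d_neg: "d k < 0" if k: "k < n" for k
  proof (rule stable_real_eigenvalue_negative[OF A stable _ _ ev[OF k]])
    show "col U k \<in> carrier_vec n" using U by (metis carrier_matD(1) col_dim)
    show "col U k \<noteq> 0\<^sub>v n" using arg_cong[OF UtU, of "\<lambda>B. B $$ (k,k)"] U k by auto
  qed
  define w where "w = (\<lambda>k. (col U k \<bullet> b)\<^sup>2)"
  define Ac where "Ac = map_mat complex_of_real A"
  define Uc where "Uc = map_mat complex_of_real U"
  define M where "M = char_poly_matrix Ac"
  define bp where "bp = map_vec (\<lambda>x. [:complex_of_real x:]) b"
  define num where "num = bp \<bullet> (adj_mat M *\<^sub>v bp)"
  have bp: "bp = map_vec (\<lambda>x. [:x:]) (map_vec complex_of_real b)"
    unfolding bp_def by (rule eq_vecI) auto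
  define N where "N = (\<Sum>k<n. [:complex_of_real (w k):] * (\<Prod>j\<in>{..<n}-{k}. [:- complex_of_real (d j), 1:]))"
  define D where "D = (\<Prod>j<n. [:- complex_of_real (d j), 1:])"
  note cplx = complexified_eigenbasis[OF A U UUt ev, folded Uc_def Ac_def]
  have "num * D = (\<Sum>k<n. [:(col Uc k \<bullet> map_vec complex_of_real b)\<^sup>2:]
                  * (\<Prod>j\<in>{..<n}-{k}. [:- complex_of_real (d j), 1:])) * det M"
    unfolding num_def D_def M_def bp
    by (rule adjugate_quadratic_form) (use A U b cplx in \<open>simp_all add: Ac_def Uc_def map_mat_transpose sym\<close>)
  also have "\<dots> = N * det M" unfolding N_def w_def using b cplx(3) by (auto intro!: sum.cong)
  finally have "num * D = N * det M" .
  moreover have "det M \<noteq> 0"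
    using degree_monic_char_poly[of Ac n] A unfolding M_def char_poly_def Ac_def by auto
  ultimately have "sss_tf A b = to_fract N / to_fract D"
    unfolding sss_tf_def Let_def num_def[unfolded bp_def] M_def Ac_def D_def
    by (auto simp: Fract_conv_to_fract frac_eq_eq simp flip: to_fract_mult)
  also have "\<dots> = (\<Sum>k<n. const_fract (w k) * (\<Prod>j\<in>{..<n}-{k}. pole_fract (d j)))
                     / (\<Prod>j<n. pole_fract (d j))"
    by (simp only: N_def D_def to_fract_sum to_fract_mult to_fract_prod)
  also have "\<dots> = (\<Sum>k<n. const_fract (w k) / pole_fract (d k))"
    by (rule sum_over_common_denominator[symmetric]) auto
  finally have "sss_tf A b = (\<Sum>k<n. const_fract (w k) / pole_fract (d k))" .
  moreover have "\<forall>k<n. d k < 0 \<and> w k \<ge> 0" using d_neg unfolding w_def by simp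
  ultimately show ?thesis by blast
qed

lemma sum_lessThan_add:
  fixes f :: "nat \<Rightarrow> 'a::comm_monoid_add"
  shows "(\<Sum>k<n+r. f k) = (\<Sum>k<n. f k) + (\<Sum>i<r. f (n + i))"
  by (induction r) (auto simp: ac_simps)

lemma error_tf_as_simple_fractions:
  fixes w d bi lam :: "nat \<Rightarrow> real"
  assumes "sss_tf A b = (\<Sum>k<n. const_fract (w k) / pole_fract (d k))"
  defines "c \<equiv> \<lambda>k. if k < n then w k else - bi (k - n)"
    and "p \<equiv> \<lambda>k. if k < n then d k else lam (k - n)"
  shows "sss_tf A b - pr_tf r bi lam = (\<Sum>k<n+r. const_fract (c k) / pole_fract (p k))"
proof -
  have neg: "to_fract [:- complex_of_real x:] = - const_fract x" for x
    by (simp flip: to_fract_uminus)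
  have "pr_tf r bi lam = (\<Sum>i<r. const_fract (bi i) / pole_fract (lam i))"
    unfolding pr_tf_def by (simp add: Fract_conv_to_fract)
  then show ?thesis
    unfolding sum_lessThan_add assms(1) c_def p_def by (simp add: sum_negf neg)
qed

lemma negative_grouped_residue:
  fixes c :: "'k \<Rightarrow> 'a::{ordered_comm_monoid_add, linorder}"
  assumes "(\<Sum>k\<in>{k\<in>K. p k = x}. c k) < 0"
  shows "\<exists>k\<in>K. p k = x \<and> c k < 0"
proof (rule ccontr)
  assume "\<not> ?thesis"
  then have "(\<Sum>k\<in>{k\<in>K. p k = x}. c k) \<ge> 0" by (intro sum_nonneg) (auto simp: not_less)
  with assms show False by simp
qed

text \<open>The error system as a reduced quotient \<open>N/D\<close> over its distinct poles \<open>P\<close>, all negative;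
  since the \<open>n\<close> residues of \<open>H\<close> are nonnegative, at most \<open>r\<close> poles carry a negative residue.\<close>
lemma error_tf_reduced:
  fixes w d bi lam :: "nat \<Rightarrow> real"
  assumes H: "sss_tf A b = (\<Sum>k<n. const_fract (w k) / pole_fract (d k))"
    and wd: "\<forall>k<n. d k < 0 \<and> w k \<ge> 0" and lam: "\<forall>i<r. lam i < 0"
  shows "\<exists>P W. finite P \<and> (\<forall>x\<in>P. W x \<noteq> 0) \<and> (\<forall>x\<in>P. x < 0) \<and> card {x\<in>P. W x < 0} \<le> r \<and>
           sss_tf A b - pr_tf r bi lam = to_fract (pf_num_poly P W) / to_fract (pf_den_poly P)"
proof -
  define c where "c = (\<lambda>k. if k < n then w k else - bi (k - n))"
  define p where "p = (\<lambda>k. if k < n then d k else lam (k - n))"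
  define W where "W = (\<lambda>x. \<Sum>k\<in>{k\<in>{..<n+r}. p k = x}. c k)"
  define P where "P = {x\<in>p ` {..<n+r}. W x \<noteq> 0}"
  have "sss_tf A b - pr_tf r bi lam = (\<Sum>k<n+r. const_fract (c k) / pole_fract (p k))"
    unfolding c_def p_def by (rule error_tf_as_simple_fractions[OF H])
  also have "\<dots> = to_fract (pf_num_poly P W) / to_fract (pf_den_poly P)"
    unfolding W_def P_def by (rule pf_sum_grouped) simp
  finally have E: "sss_tf A b - pr_tf r bi lam = to_fract (pf_num_poly P W) / to_fract (pf_den_poly P)" .
  have "p k < 0" if "k < n + r" for k
    using wd lam that unfolding p_def by (cases "k < n") auto
  then have neg: "\<forall>x\<in>P. x < 0" unfolding P_def by auto
  have "{x\<in>P. W x < 0} \<subseteq> p ` {n..<n+r}"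
  proof
    fix x assume "x \<in> {x\<in>P. W x < 0}"
    then obtain k where k: "k < n + r" "p k = x" "c k < 0"
      using negative_grouped_residue[where K = "{..<n+r}" and p = p and c = c and x = x]
      unfolding W_def by auto
    then have "k \<in> {n..<n+r}" using wd unfolding c_def by (cases "k < n") auto
    with k show "x \<in> p ` {n..<n+r}" by blast
  qed
  then have "card {x\<in>P. W x < 0} \<le> card {n..<n+r}"
    using card_mono[OF _ \<open>_ \<subseteq> p ` _\<close>] card_image_le[of "{n..<n+r}" p] by fastforce
  then have "card {x\<in>P. W x < 0} \<le> r" by simp
  moreover have "finite P" "\<forall>x\<in>P. W x \<noteq> 0" unfolding P_def by auto
  ultimately show ?thesis using neg E by blast
qed

theorem lemma2:
  fixes n r :: nat and A :: "real mat" and b :: "real vec"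
    and bi lam :: "nat \<Rightarrow> real" and S :: "real multiset"
  assumes "is_SSS n A b"
    and "is_ZIP r bi lam"
    and "r < n"
    and "sss_tf A b - pr_tf r bi lam \<noteq> 0"
    and "size S = 2 * r"
    and "\<forall>x\<in>#S. x > 0"
    and "\<forall>x. count S x \<le> zero_mult (sss_tf A b - pr_tf r bi lam) (complex_of_real x)"
  shows "\<forall>z. count (image_mset complex_of_real S) z < zero_mult (sss_tf A b - pr_tf r bi lam) z
            \<longrightarrow> z \<in> \<real> \<and> Re z < 0"
proof -
  obtain w d where wd: "\<forall>k<n. d k < 0 \<and> w k \<ge> 0"
    and H: "sss_tf A b = (\<Sum>k<n. const_fract (w k) / pole_fract (d k))"
    using sss_tf_partial_fractions[OF assms(1)] by blast
  have lam: "\<forall>i<r. lam i < 0" using assms(2) unfolding is_ZIP_def by auto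
  obtain P W where fin: "finite P" and nz: "\<forall>x\<in>P. W x \<noteq> 0" and neg: "\<forall>x\<in>P. x < 0"
      and few_negative: "card {x\<in>P. W x < 0} \<le> r"
      and E: "sss_tf A b - pr_tf r bi lam = to_fract (pf_num_poly P W) / to_fract (pf_den_poly P)"
    using error_tf_reduced[where bi = bi, OF H wd lam] by blast
  have N0: "pf_num_poly P W \<noteq> 0" using assms(4) unfolding E by auto
  have "zero_mult (sss_tf A b - pr_tf r bi lam) z = order z (pf_num_poly P W)" for z
    unfolding E by (rule zero_mult_pf_quotient[OF fin nz N0])
  then show ?thesis
    using pf_num_poly_other_roots_negative[OF fin nz neg few_negative N0 assms(5,6)] assms(7) by simp
qed

end
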